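(* Let $G$ be a finite two-player zero-sum extensive form game with perfect recall (players $1,2$, possibly with chance). Let $t\ge 1$ and let $\boldsymbol{\sigma}^0=(\sigma^0_1,\sigma^0_2),\dots,\boldsymbol{\sigma}^t=(\sigma^t_1,\sigma^t_2)$ be any sequence of strategy profiles. Define the alternating-update average regrets $$r^t_1:=\max_{\sigma^*_1}\frac{1}{t}\sum_{i=0}^{t-1}\Bigl(u_1^{(\sigma^*_1,\sigma^i_2)}-u_1^{(\sigma^i_1,\sigma^i_2)}\Bigr),\qquad r^t_2:=\max_{\sigma^*_2}\frac{1}{t}\sum_{i=0}^{t-1}\Bigl(u_2^{(\sigma^{i+1}_1,\sigma^*_2)}-u_2^{(\sigma^{i+1}_1,\sigma^i_2)}\Bigr).$$ If $r^t_1\le\epsilon_1$ and $r^t_2\le\epsilon_2$, then $$\mathrm{expl}\bigl(\bar{\sigma}^{[1,t]}_1,\bar{\sigma}^{[0,t-1]}_2\bigr)\le \epsilon_1+\epsilon_2-\frac{1}{t}\sum_{i=0}^{t-1}\Bigl(u_1^{(\sigma^{i+1}_1,\sigma^i_2)}-u_1^{(\sigma^i_1,\sigma^i_2)}\Bigr).$$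
   Context: A strategy $\sigma_p$ of player $p$ assigns to each information set $I$ of player $p$ a probability distribution over the legal actions $A(I)$. $u_p^{\boldsymbol{\sigma}}$ denotes the expected utility of player $p$ under profile $\boldsymbol{\sigma}$ (chance acting according to its fixed probabilities); zero-sum means $u_1(z)+u_2(z)=0$ at every terminal history $z$. The maxima range over all strategies of the respective player. For strategies $\sigma^a_p,\dots,\sigma^b_p$, the average strategy $\bar{\sigma}^{[a,b]}_p$ is the strategy of player $p$ whose reach (realization) probabilities $\pi_p$ of every history are the uniform average of those of $\sigma^a_p,\dots,\sigma^b_p$ (equivalently, the uniform mixture of these strategies), so that $u^{(\bar\sigma^{[a,b]}_p,\sigma_{-p})}_q=\frac{1}{b-a+1}\sum_{i=a}^b u^{(\sigma^i_p,\sigma_{-p})}_q$ for any opponent strategy. The exploitability of a profile is $\mathrm{expl}(\sigma_1,\sigma_2):=\max_{\sigma^*_1}u_1^{(\sigma^*_1,\sigma_2)}-u_1^{(\sigma_1,\sigma_2)}+\max_{\sigma^*_2}u_2^{(\sigma_1,\sigma^*_2)}-u_2^{(\sigma_1,\sigma_2)}$, which by zero-sum equals $\max_{\sigma^*_1}u_1^{(\sigma^*_1,\sigma_2)}+\max_{\sigma^*_2}u_2^{(\sigma_1,\sigma^*_2)}$. *)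

theory Defs
  imports Main "HOL.Real"
begin

text \<open>Histories are lists of actions;
  the game is given by its (finite, prefix-closed) set of histories, the player to move
  at each history, chance probabilities, information-set labels and the utility of
  player 1 at terminal histories (player 2 gets the negation: zero-sum).\<close>

datatype player = P1 | P2 | Chance

record ('a, 'i) efg =
  hists  :: "'a list set"
  turn   :: "'a list \<Rightarrow> player"
  chance :: "'a list \<Rightarrow> 'a \<Rightarrow> real"
  info   :: "'a list \<Rightarrow> 'i"
  util1  :: "'a list \<Rightarrow> real"

definition acts :: "('a, 'i) efg \<Rightarrow> 'a list \<Rightarrow> 'a set" where
  "acts G h = {a. h @ [a] \<in> hists G}"

definition terminals :: "('a, 'i) efg \<Rightarrow> 'a list set" where
  "terminals G = {h \<in> hists G. acts G h = {}}"

definition nonterminals :: "('a, 'i) efg \<Rightarrow> 'a list set" where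
  "nonterminals G = {h \<in> hists G. acts G h \<noteq> {}}"

definition util :: "('a, 'i) efg \<Rightarrow> player \<Rightarrow> 'a list \<Rightarrow> real" where
  "util G p z = (if p = P1 then util1 G z else - util1 G z)"

definition own_seq :: "('a, 'i) efg \<Rightarrow> player \<Rightarrow> 'a list \<Rightarrow> ('i \<times> 'a) list" where
  "own_seq G p h = map (\<lambda>k. (info G (take k h), h ! k))
                      (filter (\<lambda>k. turn G (take k h) = p) [0..<length h])"

definition zs_efg_perfect_recall :: "('a, 'i) efg \<Rightarrow> bool" where
  "zs_efg_perfect_recall G \<longleftrightarrow>
     finite (hists G) \<and> [] \<in> hists G \<and>
     (\<forall>h a. h @ [a] \<in> hists G \<longrightarrow> h \<in> hists G) \<and>
     (\<forall>h \<in> nonterminals G. turn G h = Chance \<longrightarrow>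
         (\<forall>a \<in> acts G h. chance G h a \<ge> 0) \<and> (\<Sum>a \<in> acts G h. chance G h a) = 1) \<and>
     (\<forall>h \<in> nonterminals G. \<forall>h' \<in> nonterminals G.
         turn G h \<noteq> Chance \<longrightarrow> turn G h' \<noteq> Chance \<longrightarrow> info G h = info G h' \<longrightarrow>
           turn G h = turn G h' \<and> acts G h = acts G h' \<and>
           own_seq G (turn G h) h = own_seq G (turn G h) h')"

definition strategy :: "('a, 'i) efg \<Rightarrow> player \<Rightarrow> ('i \<Rightarrow> 'a \<Rightarrow> real) \<Rightarrow> bool" where
  "strategy G p s \<longleftrightarrow>
     (\<forall>h \<in> nonterminals G. turn G h = p \<longrightarrow>
        (\<forall>a \<in> acts G h. s (info G h) a \<ge> 0) \<and> (\<Sum>a \<in> acts G h. s (info G h) a) = 1)"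

definition strategies :: "('a, 'i) efg \<Rightarrow> player \<Rightarrow> ('i \<Rightarrow> 'a \<Rightarrow> real) set" where
  "strategies G p = {s. strategy G p s}"

definition reach :: "('a, 'i) efg \<Rightarrow> player \<Rightarrow> ('i \<Rightarrow> 'a \<Rightarrow> real) \<Rightarrow> 'a list \<Rightarrow> real" where
  "reach G p s h = (\<Prod>k \<in> {k. k < length h \<and> turn G (take k h) = p}.
                       s (info G (take k h)) (h ! k))"

definition chance_reach :: "('a, 'i) efg \<Rightarrow> 'a list \<Rightarrow> real" where
  "chance_reach G h = (\<Prod>k \<in> {k. k < length h \<and> turn G (take k h) = Chance}.
                         chance G (take k h) (h ! k))"

definition EU :: "('a, 'i) efg \<Rightarrow> player \<Rightarrow> ('i \<Rightarrow> 'a \<Rightarrow> real) \<Rightarrow> ('i \<Rightarrow> 'a \<Rightarrow> real) \<Rightarrow> real" where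
  "EU G p s1 s2 = (\<Sum>z \<in> terminals G.
                     reach G P1 s1 z * reach G P2 s2 z * chance_reach G z * util G p z)"

definition avg_strategy :: "('a, 'i) efg \<Rightarrow> player \<Rightarrow> ('i \<Rightarrow> 'a \<Rightarrow> real)
                            \<Rightarrow> (nat \<Rightarrow> 'i \<Rightarrow> 'a \<Rightarrow> real) \<Rightarrow> nat \<Rightarrow> nat \<Rightarrow> bool" where
  "avg_strategy G p sb S a b \<longleftrightarrow> strategy G p sb \<and>
     (\<forall>h \<in> hists G. reach G p sb h = (\<Sum>i = a..b. reach G p (S i) h) / real (b - a + 1))"

definition expl :: "('a, 'i) efg \<Rightarrow> ('i \<Rightarrow> 'a \<Rightarrow> real) \<Rightarrow> ('i \<Rightarrow> 'a \<Rightarrow> real) \<Rightarrow> real" where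
  "expl G s1 s2 =
     (SUP s \<in> strategies G P1. EU G P1 s s2) - EU G P1 s1 s2
   + ((SUP s \<in> strategies G P2. EU G P2 s1 s) - EU G P2 s1 s2)"

end

theory Submission
  imports Defs
begin

(* Expected utility is linear in the reach probabilities of either player, so against an
   average strategy it is the average of the expected utilities against its components.
   Hence the best-response value of player 1 against the average of the \<sigma>_2^i (i < t) is
   r_1^t plus the average utility player 1 actually received, and likewise for player 2
   against the average of the \<sigma>_1^(i+1). Since the game is zero-sum, the two received
   averages add up to the correction term. *)

lemma take_mem_hists:
  assumes "\<And>h a. h @ [a] \<in> hists G \<Longrightarrow> h \<in> hists G" and "z \<in> hists G"
  shows "take k z \<in> hists G"
  using assms(2)
proof (induction z arbitrary: k rule: rev_induct)
  case (snoc a z)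
  then have "z \<in> hists G" using assms(1) by blast
  then show ?case using snoc by (cases "k \<le> length z") auto
qed simp

lemma finite_acts:
  assumes "finite (hists G)"
  shows "finite (acts G h)"
proof -
  have "(\<lambda>a. h @ [a]) ` acts G h \<subseteq> hists G" by (auto simp: acts_def)
  then have "finite ((\<lambda>a. h @ [a]) ` acts G h)" using assms finite_subset by blast
  then show ?thesis by (rule finite_imageD) (auto simp: inj_on_def)
qed

lemma reach_bounds:
  assumes fin: "finite (hists G)"
    and prefix_closed: "\<And>h a. h @ [a] \<in> hists G \<Longrightarrow> h \<in> hists G"
    and s: "strategy G p s" and z: "z \<in> hists G"
  shows "0 \<le> reach G p s z" and "reach G p s z \<le> 1"
proof -
  have factor: "0 \<le> s (info G (take k z)) (z ! k) \<and> s (info G (take k z)) (z ! k) \<le> 1"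
    if k: "k < length z" "turn G (take k z) = p" for k
  proof -
    let ?h = "take k z"
    have "take (Suc k) z = ?h @ [z ! k]" using k by (simp add: take_Suc_conv_app_nth)
    moreover have "take (Suc k) z \<in> hists G" using take_mem_hists[OF prefix_closed z] .
    ultimately have a: "z ! k \<in> acts G ?h" by (simp add: acts_def)
    then have "?h \<in> nonterminals G"
      using take_mem_hists[OF prefix_closed z] by (auto simp: nonterminals_def)
    then have nonneg: "\<forall>b \<in> acts G ?h. 0 \<le> s (info G ?h) b"
      and sum_1: "(\<Sum>b \<in> acts G ?h. s (info G ?h) b) = 1"
      using s k(2) by (auto simp: strategy_def)
    have "s (info G ?h) (z ! k) \<le> (\<Sum>b \<in> acts G ?h. s (info G ?h) b)"
      by (rule member_le_sum) (use a nonneg finite_acts[OF fin] in auto)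
    then show ?thesis using sum_1 nonneg a by auto
  qed
  then show "0 \<le> reach G p s z" "reach G p s z \<le> 1"
    unfolding reach_def by (auto intro!: prod_nonneg prod_le_1)
qed

lemma EU_abs_le:
  assumes G: "zs_efg_perfect_recall G" and x: "strategy G P1 x" and y: "strategy G P2 y"
  shows "\<bar>EU G q x y\<bar> \<le> (\<Sum>z \<in> terminals G. \<bar>chance_reach G z * util1 G z\<bar>)"
proof -
  have fin: "finite (hists G)" and prefix_closed: "\<And>h a. h @ [a] \<in> hists G \<Longrightarrow> h \<in> hists G"
    using G by (auto simp: zs_efg_perfect_recall_def)
  have "\<bar>EU G q x y\<bar>
      \<le> (\<Sum>z \<in> terminals G. \<bar>reach G P1 x z * reach G P2 y z * chance_reach G z * util G q z\<bar>)"
    unfolding EU_def by (rule sum_abs)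
  also have "\<dots> \<le> (\<Sum>z \<in> terminals G. \<bar>chance_reach G z * util1 G z\<bar>)"
  proof (rule sum_mono)
    fix z assume "z \<in> terminals G"
    then have z: "z \<in> hists G" by (simp add: terminals_def)
    note r1 = reach_bounds[OF fin prefix_closed x z] and r2 = reach_bounds[OF fin prefix_closed y z]
    have "\<bar>reach G P1 x z * reach G P2 y z * chance_reach G z * util G q z\<bar>
        = reach G P1 x z * reach G P2 y z * \<bar>chance_reach G z * util1 G z\<bar>"
      using r1 r2 by (simp add: util_def abs_mult)
    also have "\<dots> \<le> \<bar>chance_reach G z * util1 G z\<bar>"
      using r1 r2 by (simp add: mult_le_one mult_left_le_one_le)
    finally show "\<bar>reach G P1 x z * reach G P2 y z * chance_reach G z * util G q z\<bar>
        \<le> \<bar>chance_reach G z * util1 G z\<bar>" .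
  qed
  finally show ?thesis .
qed

(* Without boundedness a real SUP is an arbitrary junk value and the regret
   hypotheses would carry no information. *)
lemma bdd_above_EU_P1:
  assumes "zs_efg_perfect_recall G" and "strategy G P2 y"
  shows "bdd_above ((\<lambda>s. EU G q s y) ` strategies G P1)"
proof (rule bdd_aboveI2)
  fix s assume "s \<in> strategies G P1"
  then have "\<bar>EU G q s y\<bar> \<le> (\<Sum>z \<in> terminals G. \<bar>chance_reach G z * util1 G z\<bar>)"
    using EU_abs_le[OF assms(1) _ assms(2)] by (simp add: strategies_def)
  then show "EU G q s y \<le> (\<Sum>z \<in> terminals G. \<bar>chance_reach G z * util1 G z\<bar>)" by simp
qed

lemma bdd_above_EU_P2:
  assumes "zs_efg_perfect_recall G" and "strategy G P1 x"
  shows "bdd_above ((\<lambda>s. EU G q x s) ` strategies G P2)"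
proof (rule bdd_aboveI2)
  fix s assume "s \<in> strategies G P2"
  then have "\<bar>EU G q x s\<bar> \<le> (\<Sum>z \<in> terminals G. \<bar>chance_reach G z * util1 G z\<bar>)"
    using EU_abs_le[OF assms(1) assms(2)] by (simp add: strategies_def)
  then show "EU G q x s \<le> (\<Sum>z \<in> terminals G. \<bar>chance_reach G z * util1 G z\<bar>)" by simp
qed

lemma EU_P2: "EU G P2 x y = - EU G P1 x y"
  by (simp add: EU_def util_def sum_negf)

lemma EU_avg_strategy_P1:
  assumes "avg_strategy G P1 sb S a b"
  shows "EU G q sb y = (\<Sum>i = a..b. EU G q (S i) y) / real (b - a + 1)"
proof -
  have "reach G P1 sb z = (\<Sum>i = a..b. reach G P1 (S i) z) / real (b - a + 1)"
    if "z \<in> terminals G" for z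
    using assms that by (simp add: avg_strategy_def terminals_def)
  then show ?thesis
    unfolding EU_def
    by (simp add: sum_divide_distrib[symmetric] sum_distrib_right sum.swap[of _ "terminals G"])
qed

lemma EU_avg_strategy_P2:
  assumes "avg_strategy G P2 sb S a b"
  shows "EU G q x sb = (\<Sum>i = a..b. EU G q x (S i)) / real (b - a + 1)"
proof -
  have "reach G P2 sb z = (\<Sum>i = a..b. reach G P2 (S i) z) / real (b - a + 1)"
    if "z \<in> terminals G" for z
    using assms that by (simp add: avg_strategy_def terminals_def)
  then show ?thesis
    unfolding EU_def
    by (simp add: sum_divide_distrib[symmetric] sum_distrib_left sum_distrib_right
        sum.swap[of _ "terminals G"])
qed

lemma avg_strategy_Suc_shift:
  "avg_strategy G p sb S (Suc a) (Suc b) \<longleftrightarrow> avg_strategy G p sb (\<lambda>i. S (Suc i)) a b"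
  unfolding avg_strategy_def sum.shift_bounds_cl_Suc_ivl by simp

lemma cSUP_diff_const:
  fixes f :: "'a \<Rightarrow> real"
  assumes "bdd_above (f ` A)" and "A \<noteq> {}"
  shows "(SUP s \<in> A. f s - c) = (SUP s \<in> A. f s) - c"
  using Sup_add_eq[OF assms, of "- c"] by simp

lemma avg_regret_P1:
  assumes G: "zs_efg_perfect_recall G" and "t \<ge> 1" and "strategies G P1 \<noteq> {}"
    and yb: "avg_strategy G P2 yb y 0 (t - 1)"
  shows "(SUP s \<in> strategies G P1. (1 / real t) * (\<Sum>i<t. EU G P1 s (y i) - EU G P1 (x i) (y i)))
       = (SUP s \<in> strategies G P1. EU G P1 s yb) - (1 / real t) * (\<Sum>i<t. EU G P1 (x i) (y i))"
proof -
  have "{0..t - 1} = {..<t}" and "real (t - 1 - 0 + 1) = real t" using \<open>t \<ge> 1\<close> by auto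
  then have "EU G P1 s yb = (1 / real t) * (\<Sum>i<t. EU G P1 s (y i))" for s
    using EU_avg_strategy_P2[OF yb] by simp
  then have "(1 / real t) * (\<Sum>i<t. EU G P1 s (y i) - EU G P1 (x i) (y i))
      = EU G P1 s yb - (1 / real t) * (\<Sum>i<t. EU G P1 (x i) (y i))" for s
    by (simp add: sum_subtractf right_diff_distrib)
  moreover have "strategy G P2 yb" using yb by (simp add: avg_strategy_def)
  ultimately show ?thesis
    using cSUP_diff_const[OF bdd_above_EU_P1[OF G] \<open>strategies G P1 \<noteq> {}\<close>] by simp
qed

lemma avg_regret_P2:
  assumes G: "zs_efg_perfect_recall G" and "t \<ge> 1" and "strategies G P2 \<noteq> {}"
    and xb: "avg_strategy G P1 xb x 0 (t - 1)"
  shows "(SUP s \<in> strategies G P2. (1 / real t) * (\<Sum>i<t. EU G P2 (x i) s - EU G P2 (x i) (y i)))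
       = (SUP s \<in> strategies G P2. EU G P2 xb s) - (1 / real t) * (\<Sum>i<t. EU G P2 (x i) (y i))"
proof -
  have "{0..t - 1} = {..<t}" and "real (t - 1 - 0 + 1) = real t" using \<open>t \<ge> 1\<close> by auto
  then have "EU G P2 xb s = (1 / real t) * (\<Sum>i<t. EU G P2 (x i) s)" for s
    using EU_avg_strategy_P1[OF xb] by simp
  then have "(1 / real t) * (\<Sum>i<t. EU G P2 (x i) s - EU G P2 (x i) (y i))
      = EU G P2 xb s - (1 / real t) * (\<Sum>i<t. EU G P2 (x i) (y i))" for s
    by (simp add: sum_subtractf right_diff_distrib)
  moreover have "strategy G P1 xb" using xb by (simp add: avg_strategy_def)
  ultimately show ?thesis
    using cSUP_diff_const[OF bdd_above_EU_P2[OF G] \<open>strategies G P2 \<noteq> {}\<close>] by simp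
qed


theorem theorem1:
  fixes G :: "('a, 'i) efg"
    and s1 s2 :: "nat \<Rightarrow> 'i \<Rightarrow> 'a \<Rightarrow> real"
    and sb1 sb2 :: "'i \<Rightarrow> 'a \<Rightarrow> real"
    and t :: nat and e1 e2 :: real
  assumes "zs_efg_perfect_recall G"
    and "t \<ge> 1"
    and "\<forall>i \<le> t. strategy G P1 (s1 i) \<and> strategy G P2 (s2 i)"
    and "avg_strategy G P1 sb1 s1 1 t"
    and "avg_strategy G P2 sb2 s2 0 (t - 1)"
    and "(SUP s \<in> strategies G P1.
           (1 / real t) * (\<Sum>i<t. EU G P1 s (s2 i) - EU G P1 (s1 i) (s2 i))) \<le> e1"
    and "(SUP s \<in> strategies G P2.
           (1 / real t) * (\<Sum>i<t. EU G P2 (s1 (Suc i)) s - EU G P2 (s1 (Suc i)) (s2 i))) \<le> e2"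
  shows "expl G sb1 sb2 \<le> e1 + e2
           - (1 / real t) * (\<Sum>i<t. EU G P1 (s1 (Suc i)) (s2 i) - EU G P1 (s1 i) (s2 i))"
proof -
  have "strategies G P1 \<noteq> {}" and "strategies G P2 \<noteq> {}"
    using assms(3) by (auto simp: strategies_def)
  have sb1: "avg_strategy G P1 sb1 (\<lambda>i. s1 (Suc i)) 0 (t - 1)"
    using assms(2,4) avg_strategy_Suc_shift[of G P1 sb1 s1 0 "t - 1"] by simp
  have "(SUP s \<in> strategies G P1. EU G P1 s sb2)
      - (1 / real t) * (\<Sum>i<t. EU G P1 (s1 i) (s2 i)) \<le> e1"
    using assms(6) avg_regret_P1[OF assms(1,2) \<open>strategies G P1 \<noteq> {}\<close> assms(5), of s1]
    by linarith
  moreover have "(SUP s \<in> strategies G P2. EU G P2 sb1 s)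
      - (1 / real t) * (\<Sum>i<t. EU G P2 (s1 (Suc i)) (s2 i)) \<le> e2"
    using assms(7) avg_regret_P2[OF assms(1,2) \<open>strategies G P2 \<noteq> {}\<close> sb1, of s2]
    by linarith
  moreover have "(1 / real t) * (\<Sum>i<t. EU G P1 (s1 i) (s2 i))
      + (1 / real t) * (\<Sum>i<t. EU G P2 (s1 (Suc i)) (s2 i))
    = - (1 / real t) * (\<Sum>i<t. EU G P1 (s1 (Suc i)) (s2 i) - EU G P1 (s1 i) (s2 i))"
    by (simp add: EU_P2 sum_negf sum_subtractf right_diff_distrib)
  moreover have "expl G sb1 sb2
      = (SUP s \<in> strategies G P1. EU G P1 s sb2) + (SUP s \<in> strategies G P2. EU G P2 sb1 s)"
    unfolding expl_def EU_P2[of G sb1 sb2] by simp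
  ultimately show ?thesis by linarith
qed

end
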